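(* Let $X_j$, $j\in M$, be discrete random variables with $X_j\in\{0,\dots,r_j\}$, completely independent, with strictly positive joint probability vector $\pi=p(M)$. Let $t,h\subseteq M$ be disjoint, $j_h$ a vector of categories of the variables in $h$ all different from $0$, and $a\subseteq M$. Then: (a) the column space of $P_a G_{t,h}(j_h)$ is contained in the column space of $G_r$, where $r=a\cap(t\cup h)$; (b) if $t\subseteq a$ and $a\cap h=\emptyset$, then $P_aG_{t,h}(j_h)=G_t\,P(X_h=j_h)$.
   Context: Cells are in lexicographic order. $D_\pi=\mathrm{diag}(\pi)$. For $a\subseteq M$, $X_a=\bigotimes_{j\in M}X_j$ with $X_j$ the identity of order $r_j+1$ if $j\in a$ and $X_j=\mathbf 1_{r_j+1}$ otherwise, and $P_a=X_a(X_a'D_\pi X_a)^{-1}X_a'D_\pi$. For $r\subseteq M$, $G_r=\bigotimes_{j\in M}G_j$ with $G_j$ the identity of order $r_j+1$ without its first column if $j\in r$ and $G_j=\mathbf 1_{r_j+1}$ otherwise (so $G_\emptyset=\mathbf 1$). $G_{t,h}(j_h)=\bigotimes_{j\in M}B_j$ where $B_j$ is the identity of order $r_j+1$ without its first column if $j\in t$, the unit vector of length $r_j+1$ with a $1$ in the position of category $(j_h)_j$ if $j\in h$, and $\mathbf 1_{r_j+1}$ otherwise; i.e. the submatrix of $G_{t\cup h}$ with the variables in $h$ fixed to $j_h$. *)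

theory Defs
  imports Complex_Main "HOL-Library.FuncSet"
begin

(* Matrices are represented as real-valued functions of a row index and a column
   index; every operation is given the (finite) index set it sums over. *)

definition mmul :: "'j set \<Rightarrow> ('i \<Rightarrow> 'j \<Rightarrow> real) \<Rightarrow> ('j \<Rightarrow> 'k \<Rightarrow> real) \<Rightarrow> 'i \<Rightarrow> 'k \<Rightarrow> real" where
  "mmul J A B = (\<lambda>i k. \<Sum>j\<in>J. A i j * B j k)"

definition mtr :: "('i \<Rightarrow> 'j \<Rightarrow> real) \<Rightarrow> 'j \<Rightarrow> 'i \<Rightarrow> real" where
  "mtr A = (\<lambda>j i. A i j)"

definition mdiag :: "('i \<Rightarrow> real) \<Rightarrow> 'i \<Rightarrow> 'i \<Rightarrow> real" where
  "mdiag p = (\<lambda>i i'. if i = i' then p i else 0)"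

definition minv :: "'i set \<Rightarrow> ('i \<Rightarrow> 'i \<Rightarrow> real) \<Rightarrow> 'i \<Rightarrow> 'i \<Rightarrow> real" where
  "minv K A = (SOME B. (\<forall>i\<in>K. \<forall>k\<in>K. mmul K A B i k = (if i = k then 1 else 0)) \<and>
                       (\<forall>i\<in>K. \<forall>k\<in>K. mmul K B A i k = (if i = k then 1 else 0)))"

definition cells :: "'v set \<Rightarrow> ('v \<Rightarrow> nat) \<Rightarrow> ('v \<Rightarrow> nat) set" where
  "cells M r = PiE M (\<lambda>j. {0..r j})"

(* Kronecker product of the family B j (j \<in> M); rows/columns are indexed by
   tuples (functions on M), i.e. the index-free form of the Kronecker product. *)
definition kron :: "'v set \<Rightarrow> ('v \<Rightarrow> nat \<Rightarrow> nat \<Rightarrow> real) \<Rightarrow> ('v \<Rightarrow> nat) \<Rightarrow> ('v \<Rightarrow> nat) \<Rightarrow> real" where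
  "kron M B = (\<lambda>x y. \<Prod>j\<in>M. B j (x j) (y j))"

(* X_a : factor j is the identity of order r_j+1 (j \<in> a) or the all-ones column *)
definition Xfac :: "'v set \<Rightarrow> 'v \<Rightarrow> nat \<Rightarrow> nat \<Rightarrow> real" where
  "Xfac a j = (\<lambda>u v. if j \<in> a then (if u = v then 1 else 0) else 1)"

definition Xcols :: "'v set \<Rightarrow> 'v set \<Rightarrow> ('v \<Rightarrow> nat) \<Rightarrow> ('v \<Rightarrow> nat) set" where
  "Xcols M a r = PiE M (\<lambda>j. if j \<in> a then {0..r j} else {0})"

definition Xmat :: "'v set \<Rightarrow> 'v set \<Rightarrow> ('v \<Rightarrow> nat) \<Rightarrow> ('v \<Rightarrow> nat) \<Rightarrow> real" where
  "Xmat M a = kron M (Xfac a)"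

definition Pmat :: "'v set \<Rightarrow> ('v \<Rightarrow> nat) \<Rightarrow> (('v \<Rightarrow> nat) \<Rightarrow> real) \<Rightarrow> 'v set
                    \<Rightarrow> ('v \<Rightarrow> nat) \<Rightarrow> ('v \<Rightarrow> nat) \<Rightarrow> real" where
  "Pmat M r p a =
     (let C = cells M r; Ca = Xcols M a r; X = Xmat M a;
          XtD = mmul C (mtr X) (mdiag p)
      in mmul Ca X (mmul Ca (minv Ca (mmul C XtD X)) XtD))"

(* G_s : factor j is the identity of order r_j+1 without its first column (j \<in> s),
   otherwise the all-ones column *)
definition Gfac :: "'v set \<Rightarrow> 'v \<Rightarrow> nat \<Rightarrow> nat \<Rightarrow> real" where
  "Gfac s j = (\<lambda>u v. if j \<in> s then (if u = v then 1 else 0) else 1)"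

definition Gcols :: "'v set \<Rightarrow> 'v set \<Rightarrow> ('v \<Rightarrow> nat) \<Rightarrow> ('v \<Rightarrow> nat) set" where
  "Gcols M s r = PiE M (\<lambda>j. if j \<in> s then {1..r j} else {0})"

definition Gmat :: "'v set \<Rightarrow> 'v set \<Rightarrow> ('v \<Rightarrow> nat) \<Rightarrow> ('v \<Rightarrow> nat) \<Rightarrow> real" where
  "Gmat M s = kron M (Gfac s)"

definition GTHfac :: "'v set \<Rightarrow> 'v set \<Rightarrow> ('v \<Rightarrow> nat) \<Rightarrow> 'v \<Rightarrow> nat \<Rightarrow> nat \<Rightarrow> real" where
  "GTHfac t h jh j = (\<lambda>u v. if j \<in> t then (if u = v then 1 else 0)
                            else if j \<in> h then (if u = jh j then 1 else 0) else 1)"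

(* its columns: {1..r j} for j \<in> t, a single column otherwise (= Gcols M t r) *)
definition GTHmat :: "'v set \<Rightarrow> 'v set \<Rightarrow> 'v set \<Rightarrow> ('v \<Rightarrow> nat) \<Rightarrow> ('v \<Rightarrow> nat) \<Rightarrow> ('v \<Rightarrow> nat) \<Rightarrow> real" where
  "GTHmat M t h jh = kron M (GTHfac t h jh)"

definition prob_ev :: "(('v \<Rightarrow> nat) \<Rightarrow> real) \<Rightarrow> ('v \<Rightarrow> nat) set \<Rightarrow> (('v \<Rightarrow> nat) \<Rightarrow> bool) \<Rightarrow> real" where
  "prob_ev p C E = (\<Sum>z\<in>{z\<in>C. E z}. p z)"

definition completely_independent :: "'v set \<Rightarrow> ('v \<Rightarrow> nat) \<Rightarrow> (('v \<Rightarrow> nat) \<Rightarrow> real) \<Rightarrow> bool" where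
  "completely_independent M r p \<longleftrightarrow>
     (\<forall>S\<subseteq>M. \<forall>x\<in>cells M r.
        prob_ev p (cells M r) (\<lambda>z. \<forall>j\<in>S. z j = x j)
        = (\<Prod>j\<in>S. prob_ev p (cells M r) (\<lambda>z. z j = x j)))"

end

theory Submission
  imports Defs
begin

text \<open>The weighted Gram matrix X_a' D_\<pi> X_a is diagonal, with the marginal probabilities
  P(X_a = c) on its diagonal, so P_a is the conditional expectation given X_a:
  (P_a v)(x) = E[v | X_a = x_a]. A column of G_{t,h}(j_h) is the indicator of an event
  X_{t \<union> h} = w; by independence its conditional expectation is the indicator of x_r = w_r,
  r = a \<inter> (t \<union> h), times the product of the P(X_j = w_j) over j \<in> (t \<union> h) - a. All categories
  in w are non-zero, so that indicator is a column of G_r; when t \<subseteq> a and a \<inter> h = {} it is the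
  column y of G_t and the product is P(X_h = j_h).\<close>

lemma prod_of_bool:
  assumes "finite A"
  shows "(\<Prod>j\<in>A. of_bool (P j)) = (of_bool (\<forall>j\<in>A. P j) :: 'a :: comm_semiring_1)"
  using assms by (induction A rule: finite_induct) (simp_all add: of_bool_conj)

lemma kron_of_bool:
  assumes "finite M" "\<And>j u v. j \<in> M \<Longrightarrow> B j u v = of_bool (R j u v)"
  shows "kron M B x y = of_bool (\<forall>j\<in>M. R j (x j) (y j))"
  unfolding kron_def using assms by (simp add: prod_of_bool)

lemma Gmat_apply:
  assumes "finite M" "s \<subseteq> M"
  shows "Gmat M s x y = of_bool (\<forall>j\<in>s. x j = y j)"
proof -
  have "Gmat M s x y = of_bool (\<forall>j\<in>M. j \<in> s \<longrightarrow> x j = y j)"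
    unfolding Gmat_def using assms(1) by (rule kron_of_bool) (simp add: Gfac_def)
  then show ?thesis using assms(2) by auto
qed

lemma Xmat_eq_Gmat: "Xmat M a = Gmat M a"
  unfolding Xmat_def Gmat_def Xfac_def Gfac_def ..

lemma GTHmat_apply:
  assumes "finite M" "t \<subseteq> M" "h \<subseteq> M"
  shows "GTHmat M t h jh z y = of_bool (\<forall>j\<in>t \<union> h. z j = (if j \<in> t then y j else jh j))"
proof -
  have "GTHmat M t h jh z y = of_bool (\<forall>j\<in>M. (if j \<in> t then z j = y j else j \<in> h \<longrightarrow> z j = jh j))"
    unfolding GTHmat_def using assms(1) by (rule kron_of_bool) (simp add: GTHfac_def)
  then show ?thesis using assms(2,3) by (auto simp: of_bool_eq_iff)
qed

lemma finite_cells: "finite M \<Longrightarrow> finite (cells M r)"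
  unfolding cells_def by (simp add: finite_PiE)

lemma sum_PiE_of_bool_coords:
  fixes f :: "('v \<Rightarrow> nat) \<Rightarrow> 'a :: semiring_1"
  assumes "finite M" "S \<subseteq> M" "\<forall>j\<in>S. w j \<in> A j" "\<forall>j\<in>S. finite (A j)"
  shows "(\<Sum>c\<in>PiE M (\<lambda>j. if j \<in> S then A j else {0}). of_bool (\<forall>j\<in>S. w j = c j) * f c)
           = f (restrict (\<lambda>j. if j \<in> S then w j else 0) M)"
proof -
  let ?C = "PiE M (\<lambda>j. if j \<in> S then A j else {0})"
  have "?C \<inter> {c. \<forall>j\<in>S. w j = c j} = {restrict (\<lambda>j. if j \<in> S then w j else 0) M}"
    using assms(2,3) by (auto simp: PiE_iff extensional_def fun_eq_iff split: if_splits)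
  moreover have "finite ?C" using assms(1,4) by (intro finite_PiE) auto
  ultimately show ?thesis by simp
qed

lemma mmul_mdiag_right:
  assumes "finite K" "k \<in> K"
  shows "mmul K A (mdiag p) i k = A i k * p k"
  unfolding mmul_def mdiag_def using assms by (simp add: if_distrib cong: if_cong)

lemma mmul_diagonal_left:
  assumes "finite K" "i \<in> K" "\<forall>j\<in>K. A i j = of_bool (i = j) * d"
  shows "mmul K A B i k = d * B i k"
proof -
  have "mmul K A B i k = (\<Sum>j\<in>K. of_bool (i = j) * (d * B j k))"
    unfolding mmul_def using assms(3) by (intro sum.cong) auto
  then show ?thesis using assms(1,2) by simp
qed

lemma minv_diagonal:
  assumes "finite K" "\<forall>i\<in>K. d i \<noteq> 0" "\<forall>i\<in>K. \<forall>k\<in>K. A i k = of_bool (i = k) * d i"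
    and "i \<in> K" "k \<in> K"
  shows "minv K A i k = of_bool (i = k) / d i"
proof -
  let ?unit = "\<lambda>B. \<forall>i\<in>K. \<forall>k\<in>K. mmul K A B i k = of_bool (i = k)"
  let ?inverse = "\<lambda>B. ?unit B \<and> (\<forall>i\<in>K. \<forall>k\<in>K. mmul K B A i k = of_bool (i = k))"
  define D where "D i k = of_bool (i = k) / d i" for i k
  have D_inverse: "?inverse D"
  proof (intro conjI ballI)
    fix i k assume "i \<in> K" "k \<in> K"
    then show "mmul K A D i k = of_bool (i = k)"
      using assms(1-3) by (subst mmul_diagonal_left[of _ _ _ "d i"]) (auto simp: D_def)
    have "mmul K D A i k = (\<Sum>j\<in>K. of_bool (i = j) * (A j k / d j))"
      unfolding mmul_def D_def by (intro sum.cong) auto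
    then show "mmul K D A i k = of_bool (i = k)"
      using \<open>i \<in> K\<close> \<open>k \<in> K\<close> assms(1-3) by simp
  qed
  have "minv K A = (SOME B. ?inverse B)"
    unfolding minv_def of_bool_def ..
  then have "?unit (minv K A)"
    using someI[where P = ?inverse, OF D_inverse] by simp
  moreover have "mmul K A (minv K A) i k = d i * minv K A i k"
    using assms by (intro mmul_diagonal_left) auto
  ultimately have "d i * minv K A i k = of_bool (i = k)"
    using assms(4,5) by simp
  then show ?thesis using assms(2,4) by (simp add: field_simps)
qed

lemma prob_ev_eq_sum:
  "finite C \<Longrightarrow> prob_ev p C E = (\<Sum>z\<in>C. of_bool (E z) * p z)"
  unfolding prob_ev_def by (simp add: Collect_conj_eq Int_commute inf_set_def)

lemma prob_ev_cong:
  "(\<And>z. z \<in> C \<Longrightarrow> E z = E' z) \<Longrightarrow> prob_ev p C E = prob_ev p C E'"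
  unfolding prob_ev_def by (metis (mono_tags, lifting) Collect_cong)

lemma prob_ev_pos:
  assumes "finite C" "\<forall>z\<in>C. p z > 0" "x \<in> C" "E x"
  shows "prob_ev p C E > 0"
  unfolding prob_ev_def using assms by (intro sum_pos2[of _ x]) (auto intro: less_imp_le)

lemma completely_independent_prob_ev_prod:
  assumes "completely_independent M r p" "S \<subseteq> M" "\<forall>j\<in>S. w j \<le> r j"
  shows "prob_ev p (cells M r) (\<lambda>z. \<forall>j\<in>S. z j = w j)
           = (\<Prod>j\<in>S. prob_ev p (cells M r) (\<lambda>z. z j = w j))"
proof -
  define w' where "w' = restrict (\<lambda>j. if j \<in> S then w j else 0) M"
  have "w' \<in> cells M r"
    using assms(3) unfolding w'_def cells_def by auto
  then have "prob_ev p (cells M r) (\<lambda>z. \<forall>j\<in>S. z j = w' j)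
               = (\<Prod>j\<in>S. prob_ev p (cells M r) (\<lambda>z. z j = w' j))"
    using assms(1,2) unfolding completely_independent_def by blast
  moreover have "\<forall>j\<in>S. w' j = w j" using assms(2) unfolding w'_def by auto
  ultimately show ?thesis by (simp cong: prod.cong)
qed

lemma Xmat_Gram:
  assumes "finite M" "a \<subseteq> M" "c \<in> Xcols M a r" "c' \<in> Xcols M a r"
  shows "mmul (cells M r) (mmul (cells M r) (mtr (Xmat M a)) (mdiag p)) (Xmat M a) c c'
           = of_bool (c = c') * prob_ev p (cells M r) (\<lambda>z. \<forall>j\<in>a. z j = c j)"
proof -
  have agree: "c = c' \<longleftrightarrow> (\<forall>j\<in>a. c j = c' j)"
  proof (intro iffI ext)
    fix j assume "\<forall>j\<in>a. c j = c' j"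
    then show "c j = c' j"
      using assms(3,4) unfolding Xcols_def
      by (cases "j \<in> M"; cases "j \<in> a") (force simp: PiE_iff extensional_def)+
  qed simp
  have "mmul (cells M r) (mmul (cells M r) (mtr (Xmat M a)) (mdiag p)) (Xmat M a) c c'
          = (\<Sum>z\<in>cells M r. of_bool ((\<forall>j\<in>a. z j = c j) \<and> (\<forall>j\<in>a. z j = c' j)) * p z)"
    unfolding mmul_def[of _ _ "Xmat M a"] using assms(1,2)
    by (intro sum.cong) (auto simp: mmul_mdiag_right finite_cells mtr_def Xmat_eq_Gmat Gmat_apply)
  also have "\<dots> = of_bool (c = c') * prob_ev p (cells M r) (\<lambda>z. \<forall>j\<in>a. z j = c j)"
    using agree assms(1) by (auto simp: prob_ev_eq_sum finite_cells intro!: sum.neutral)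
  finally show ?thesis .
qed

lemma Xcols_subset_cells: "Xcols M a r \<subseteq> cells M r"
  unfolding Xcols_def cells_def by (rule PiE_mono) auto

lemma Pmat_apply:
  assumes fin: "finite M" and aM: "a \<subseteq> M" and pos: "\<forall>z\<in>cells M r. p z > 0"
    and x: "x \<in> cells M r" and y: "y \<in> cells M r"
  shows "Pmat M r p a x y
           = of_bool (\<forall>j\<in>a. y j = x j) * p y / prob_ev p (cells M r) (\<lambda>z. \<forall>j\<in>a. z j = x j)"
proof -
  let ?C = "cells M r" and ?Ca = "Xcols M a r" and ?X = "Xmat M a"
  let ?XtD = "mmul ?C (mtr ?X) (mdiag p)"
  define marg where "marg c = prob_ev p ?C (\<lambda>z. \<forall>j\<in>a. z j = c j)" for c
  have inv: "minv ?Ca (mmul ?C ?XtD ?X) c c' = of_bool (c = c') / marg c"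
    if "c \<in> ?Ca" "c' \<in> ?Ca" for c c'
  proof (rule minv_diagonal)
    show "finite ?Ca" using fin unfolding Xcols_def by (simp add: finite_PiE)
    show "\<forall>c\<in>?Ca. marg c \<noteq> 0"
    proof
      fix c assume "c \<in> ?Ca"
      then have "c \<in> ?C" using Xcols_subset_cells by blast
      then show "marg c \<noteq> 0"
        using prob_ev_pos[OF finite_cells[OF fin] pos \<open>c \<in> ?C\<close>, of "\<lambda>z. \<forall>j\<in>a. z j = c j"]
        unfolding marg_def by simp
    qed
    show "\<forall>c\<in>?Ca. \<forall>c'\<in>?Ca. mmul ?C ?XtD ?X c c' = of_bool (c = c') * marg c"
      using fin aM by (simp add: Xmat_Gram marg_def)
  qed (use that in auto)
  define c0 where "c0 = restrict (\<lambda>j. if j \<in> a then x j else 0) M"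
  have c0: "\<forall>j\<in>a. c0 j = x j" using aM by (auto simp: c0_def)
  have XtD: "?XtD c y = ?X y c * p y" for c
    using fin y by (simp add: mmul_mdiag_right finite_cells mtr_def)
  have "Pmat M r p a x y = (\<Sum>c\<in>?Ca. ?X x c * (\<Sum>c'\<in>?Ca. minv ?Ca (mmul ?C ?XtD ?X) c c' * ?XtD c' y))"
    unfolding Pmat_def Let_def mmul_def[of ?Ca] ..
  also have "\<dots> = (\<Sum>c\<in>?Ca. of_bool (\<forall>j\<in>a. x j = c j) * (of_bool (\<forall>j\<in>a. y j = c j) * p y / marg c))"
  proof (intro sum.cong refl)
    fix c assume c: "c \<in> ?Ca"
    have "(\<Sum>c'\<in>?Ca. minv ?Ca (mmul ?C ?XtD ?X) c c' * ?XtD c' y)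
            = (\<Sum>c'\<in>?Ca. of_bool (c = c') * (?X y c * p y / marg c))"
      using c fin y by (intro sum.cong) (auto simp: inv XtD)
    also have "\<dots> = ?X y c * p y / marg c"
      using c fin unfolding Xcols_def
      by (subst sum_of_bool_mult_eq) (auto simp: finite_PiE Int_def Collect_conv_if)
    finally have inner: "(\<Sum>c'\<in>?Ca. minv ?Ca (mmul ?C ?XtD ?X) c c' * ?XtD c' y) = ?X y c * p y / marg c" .
    show "?X x c * (\<Sum>c'\<in>?Ca. minv ?Ca (mmul ?C ?XtD ?X) c c' * ?XtD c' y)
            = of_bool (\<forall>j\<in>a. x j = c j) * (of_bool (\<forall>j\<in>a. y j = c j) * p y / marg c)"
      unfolding inner using fin aM by (simp add: Xmat_eq_Gmat Gmat_apply)
  qed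
  also have "\<dots> = of_bool (\<forall>j\<in>a. y j = c0 j) * p y / marg c0"
    unfolding Xcols_def c0_def using fin aM x by (intro sum_PiE_of_bool_coords) (auto simp: cells_def)
  also have "\<dots> = of_bool (\<forall>j\<in>a. y j = x j) * p y / marg x"
    using c0 unfolding marg_def by (simp cong: prob_ev_cong)
  finally show ?thesis unfolding marg_def .
qed

lemma Pmat_coords_indicator:
  assumes fin: "finite M" and pos: "\<forall>z\<in>cells M r. p z > 0"
    and indep: "completely_independent M r p"
    and aM: "a \<subseteq> M" and SM: "S \<subseteq> M" and w: "\<forall>j\<in>S. w j \<le> r j" and x: "x \<in> cells M r"
  shows "(\<Sum>z\<in>cells M r. Pmat M r p a x z * of_bool (\<forall>j\<in>S. z j = w j))
           = of_bool (\<forall>j\<in>a \<inter> S. x j = w j) * (\<Prod>j\<in>S - a. prob_ev p (cells M r) (\<lambda>z. z j = w j))"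
proof -
  let ?C = "cells M r"
  let ?q = "\<lambda>j v. prob_ev p ?C (\<lambda>z. z j = v)"
  define E where "E z \<longleftrightarrow> (\<forall>j\<in>a. z j = x j) \<and> (\<forall>j\<in>S. z j = w j)" for z
  define marg where "marg = prob_ev p ?C (\<lambda>z. \<forall>j\<in>a. z j = x j)"
  have x_le: "\<forall>j\<in>M. x j \<le> r j" using x unfolding cells_def by auto
  have marg: "marg = (\<Prod>j\<in>a. ?q j (x j))"
    unfolding marg_def using x_le aM by (intro completely_independent_prob_ev_prod[OF indep]) auto
  have "marg > 0" unfolding marg_def using x by (intro prob_ev_pos[OF finite_cells[OF fin] pos]) auto
  have "(\<Sum>z\<in>?C. Pmat M r p a x z * of_bool (\<forall>j\<in>S. z j = w j)) = (\<Sum>z\<in>?C. of_bool (E z) * p z) / marg"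
    unfolding sum_divide_distrib using fin aM pos x
    by (intro sum.cong) (auto simp: Pmat_apply E_def marg_def)
  also have "\<dots> = prob_ev p ?C E / marg" using fin by (simp add: prob_ev_eq_sum finite_cells)
  also have "\<dots> = of_bool (\<forall>j\<in>a \<inter> S. x j = w j) * (\<Prod>j\<in>S - a. ?q j (w j))"
  proof (cases "\<forall>j\<in>a \<inter> S. x j = w j")
    case False
    then have "prob_ev p ?C E = 0" unfolding prob_ev_def E_def by (intro sum.neutral) auto
    then show ?thesis using False by simp
  next
    case True
    define v where "v j = (if j \<in> a then x j else w j)" for j
    have "prob_ev p ?C E = prob_ev p ?C (\<lambda>z. \<forall>j\<in>a \<union> (S - a). z j = v j)"
      using True unfolding E_def v_def by (intro prob_ev_cong) auto
    also have "\<dots> = (\<Prod>j\<in>a \<union> (S - a). ?q j (v j))"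
      using aM SM x_le w unfolding v_def by (intro completely_independent_prob_ev_prod[OF indep]) auto
    also have "\<dots> = marg * (\<Prod>j\<in>S - a. ?q j (w j))"
      using fin aM SM unfolding marg v_def
      by (subst prod.union_disjoint) (auto intro: finite_subset intro!: arg_cong2[where f = "(*)"] prod.cong)
    finally show ?thesis using True \<open>marg > 0\<close> by simp
  qed
  finally show ?thesis .
qed

lemma Gcols_coord_mem:
  "y \<in> Gcols M t r \<Longrightarrow> t \<subseteq> M \<Longrightarrow> j \<in> t \<Longrightarrow> y j \<in> {1..r j}"
  unfolding Gcols_def by (auto simp: PiE_iff dest!: bspec[of _ _ j])

lemma Pmat_GTHmat_apply:
  assumes fin: "finite M" and pos: "\<forall>z\<in>cells M r. p z > 0"
    and indep: "completely_independent M r p"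
    and "t \<subseteq> M" "h \<subseteq> M" "a \<subseteq> M" and jh: "\<forall>j\<in>h. jh j \<in> {1..r j}"
    and x: "x \<in> cells M r" and y: "y \<in> Gcols M t r"
  shows "mmul (cells M r) (Pmat M r p a) (GTHmat M t h jh) x y
           = of_bool (\<forall>j\<in>a \<inter> (t \<union> h). x j = (if j \<in> t then y j else jh j))
             * (\<Prod>j\<in>(t \<union> h) - a. prob_ev p (cells M r) (\<lambda>z. z j = (if j \<in> t then y j else jh j)))"
  unfolding mmul_def GTHmat_apply[OF fin assms(4,5)] using assms y jh
  by (intro Pmat_coords_indicator) (auto dest: Gcols_coord_mem)

lemma Pmat_GTHmat_in_Gmat_col_space:
  assumes fin: "finite M" and pos: "\<forall>z\<in>cells M r. p z > 0"
    and indep: "completely_independent M r p"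
    and tM: "t \<subseteq> M" and hM: "h \<subseteq> M" and aM: "a \<subseteq> M" and jh: "\<forall>j\<in>h. jh j \<in> {1..r j}"
  shows "\<exists>C. \<forall>x\<in>cells M r. \<forall>y\<in>Gcols M t r.
           mmul (cells M r) (Pmat M r p a) (GTHmat M t h jh) x y
           = mmul (Gcols M (a \<inter> (t \<union> h)) r) (Gmat M (a \<inter> (t \<union> h))) C x y"
proof (intro exI ballI)
  let ?R = "a \<inter> (t \<union> h)"
  fix x y assume x: "x \<in> cells M r" and y: "y \<in> Gcols M t r"
  define tg where "tg y j = (if j \<in> t then y j else jh j)" for y :: "'a \<Rightarrow> nat" and j
  define Q where "Q y = (\<Prod>j\<in>(t \<union> h) - a. prob_ev p (cells M r) (\<lambda>z. z j = tg y j))" for y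
  have RM: "?R \<subseteq> M" using aM by blast
  have tg: "\<forall>j\<in>?R. tg y j \<in> {1..r j}"
    using y jh tM unfolding tg_def by (auto dest: Gcols_coord_mem)
  have "mmul (Gcols M ?R r) (Gmat M ?R) (\<lambda>c y. of_bool (\<forall>j\<in>?R. tg y j = c j) * Q y) x y
          = (\<Sum>c\<in>Gcols M ?R r. of_bool (\<forall>j\<in>?R. tg y j = c j) * (Gmat M ?R x c * Q y))"
    unfolding mmul_def by (simp add: ac_simps)
  also have "\<dots> = of_bool (\<forall>j\<in>?R. x j = tg y j) * Q y"
    unfolding Gcols_def using fin RM tg
    by (subst sum_PiE_of_bool_coords) (auto simp: Gmat_apply)
  also have "\<dots> = mmul (cells M r) (Pmat M r p a) (GTHmat M t h jh) x y"
    unfolding Pmat_GTHmat_apply[OF fin pos indep tM hM aM jh x y] tg_def Q_def ..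
  finally show "mmul (cells M r) (Pmat M r p a) (GTHmat M t h jh) x y
      = mmul (Gcols M ?R r) (Gmat M ?R) (\<lambda>c y. of_bool (\<forall>j\<in>?R. tg y j = c j) * Q y) x y" ..
qed

lemma Pmat_GTHmat_eq_Gmat_prob:
  assumes fin: "finite M" and pos: "\<forall>z\<in>cells M r. p z > 0"
    and indep: "completely_independent M r p"
    and tM: "t \<subseteq> M" and hM: "h \<subseteq> M" and aM: "a \<subseteq> M" and jh: "\<forall>j\<in>h. jh j \<in> {1..r j}"
    and th: "t \<inter> h = {}" and ta: "t \<subseteq> a" and ah: "a \<inter> h = {}"
    and x: "x \<in> cells M r" and y: "y \<in> Gcols M t r"
  shows "mmul (cells M r) (Pmat M r p a) (GTHmat M t h jh) x y
           = Gmat M t x y * prob_ev p (cells M r) (\<lambda>z. \<forall>j\<in>h. z j = jh j)"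
proof -
  have "a \<inter> (t \<union> h) = t" "(t \<union> h) - a = h" using ta ah by auto
  moreover have "prob_ev p (cells M r) (\<lambda>z. \<forall>j\<in>h. z j = jh j)
                   = (\<Prod>j\<in>h. prob_ev p (cells M r) (\<lambda>z. z j = jh j))"
    using hM jh by (intro completely_independent_prob_ev_prod[OF indep]) auto
  ultimately show ?thesis
    unfolding Pmat_GTHmat_apply[OF fin pos indep tM hM aM jh x y] Gmat_apply[OF fin tM]
    using th by (auto intro!: prod.cong)
qed

theorem lemma7:
  fixes M :: "'v set" and r :: "'v \<Rightarrow> nat" and p :: "('v \<Rightarrow> nat) \<Rightarrow> real"
    and t h a :: "'v set" and jh :: "'v \<Rightarrow> nat"
  assumes "finite M"
    and pos: "\<forall>x\<in>cells M r. p x > 0"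
    and sum1: "(\<Sum>x\<in>cells M r. p x) = 1"
    and indep: "completely_independent M r p"
    and "t \<subseteq> M" and "h \<subseteq> M" and "t \<inter> h = {}"
    and "\<forall>j\<in>h. jh j \<in> {1..r j}"
    and "a \<subseteq> M"
  shows "(\<exists>C. \<forall>x\<in>cells M r. \<forall>y\<in>Gcols M t r.
            mmul (cells M r) (Pmat M r p a) (GTHmat M t h jh) x y
            = mmul (Gcols M (a \<inter> (t \<union> h)) r) (Gmat M (a \<inter> (t \<union> h))) C x y)
       \<and> (t \<subseteq> a \<and> a \<inter> h = {} \<longrightarrow>
            (\<forall>x\<in>cells M r. \<forall>y\<in>Gcols M t r.
               mmul (cells M r) (Pmat M r p a) (GTHmat M t h jh) x y
               = Gmat M t x y * prob_ev p (cells M r) (\<lambda>z. \<forall>j\<in>h. z j = jh j)))"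
  using Pmat_GTHmat_in_Gmat_col_space[OF assms(1,2,4-6,9,8)]
    Pmat_GTHmat_eq_Gmat_prob[OF assms(1,2,4-6,9,8,7)]
  by blast

end
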